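(* Let $a<b$ be real numbers and let $f:[a,b]\to\mathbb{R}$ be an increasing function which is either convex or concave on $[a,b]$. Then for every integer $n\ge1$, $$A_{n+1}\le A_n\qquad\text{and}\qquad B_n\le B_{n+1}.$$
   Context: For a function $f:[a,b]\to\mathbb{R}$ and integers $n\ge1$, put $x_i^{(n)}=a+i\frac{b-a}{n}$ for $i=0,1,\dots,n$, and define the Riemann sums $$A_n=\frac{b-a}{n}\sum_{i=1}^{n} f\big(x_i^{(n)}\big),\qquad B_n=\frac{b-a}{n}\sum_{i=0}^{n-1} f\big(x_i^{(n)}\big).$$ *)

theory Defs
  imports "HOL-Analysis.Analysis"
begin

definition riemann_node :: "real \<Rightarrow> real \<Rightarrow> nat \<Rightarrow> nat \<Rightarrow> real" where
  "riemann_node a b n i = a + real i * (b - a) / real n"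

definition riemann_A :: "(real \<Rightarrow> real) \<Rightarrow> real \<Rightarrow> real \<Rightarrow> nat \<Rightarrow> real" where
  "riemann_A f a b n = (b - a) / real n * (\<Sum>i=1..n. f (riemann_node a b n i))"

definition riemann_B :: "(real \<Rightarrow> real) \<Rightarrow> real \<Rightarrow> real \<Rightarrow> nat \<Rightarrow> real" where
  "riemann_B f a b n = (b - a) / real n * (\<Sum>i=0..<n. f (riemann_node a b n i))"

end

theory Submission
  imports Defs
begin

(* Write x_i = a + i(b-a)/n for the nodes of mesh n and y_i for those of mesh n+1.
   Then A_{n+1} <= A_n amounts to n * S_{n+1} <= (n+1) * S_n, where S_n is the sum
   of f over x_1..x_n.  The nodes of the two meshes interlace:
     (n+1) y_{i+1} = (i+1) x_i + (n-i) x_{i+1}   and   n x_i = (n-i) y_i + i y_{i+1}.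
   For convex f the first identity and Jensen's inequality bound each f(y_{i+1});
   for concave f the second bounds each f(x_i).  Summing these weighted two-point
   inequalities (an Abel-type regrouping of adjacent terms) and using the
   monotonicity bounds  n f(a) <= S_n <= n f(b)  yields the claim for A_n.
   The claim for B_n follows by the reflection g(x) = -f(a+b-x): g is again
   increasing, it is convex exactly when f is concave, and B_n(f) = -A_n(g). *)

lemma riemann_node_in_interval:
  assumes "a \<le> b" "i \<le> n"
  shows "riemann_node a b n i \<in> {a..b}"
proof -
  have "real i * (b - a) \<le> real n * (b - a)"
    using assms by (intro mult_right_mono) auto
  then have "real i * (b - a) / real n \<le> b - a"
    using assms by (cases "n = 0") (auto simp: divide_le_eq mult.commute)
  then show ?thesis
    using assms by (simp add: riemann_node_def)
qed

lemma riemann_node_0 [simp]: "riemann_node a b n 0 = a"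
  by (simp add: riemann_node_def)

lemma riemann_node_last: "n \<ge> 1 \<Longrightarrow> riemann_node a b n n = b"
  by (simp add: riemann_node_def)

lemma riemann_node_refine:
  assumes "n \<ge> 1"
  shows "real (n + 1) * riemann_node a b (n + 1) (Suc i)
       = real (Suc i) * riemann_node a b n i + (real n - real i) * riemann_node a b n (Suc i)"
  using assms unfolding riemann_node_def by (simp add: divide_simps) algebra

lemma riemann_node_coarsen:
  assumes "n \<ge> 1"
  shows "real n * riemann_node a b n i
       = (real n - real i) * riemann_node a b (n + 1) i + real i * riemann_node a b (n + 1) (Suc i)"
  using assms unfolding riemann_node_def by (simp add: divide_simps) algebra

lemma convex_on_weighted_two_points:
  fixes f :: "real \<Rightarrow> real"
  assumes "convex_on S f" "x \<in> S" "y \<in> S" "p \<ge> 0" "q \<ge> 0" "p + q > 0"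
  shows "(p + q) * f ((p * x + q * y) / (p + q)) \<le> p * f x + q * f y"
proof -
  define u v where "u = p / (p + q)" and "v = q / (p + q)"
  have "u \<ge> 0" "v \<ge> 0" "u + v = 1"
    using assms by (simp_all add: u_def v_def add_divide_distrib [symmetric])
  then have "f (u * x + v * y) \<le> u * f x + v * f y"
    using assms(1-3) by (auto simp: convex_on_def)
  moreover have "u * x + v * y = (p * x + q * y) / (p + q)"
    by (simp add: u_def v_def add_divide_distrib)
  ultimately have "(p + q) * f ((p * x + q * y) / (p + q)) \<le> (p + q) * (u * f x + v * f y)"
    using assms(6) by simp
  also have "\<dots> = ((p + q) * u) * f x + ((p + q) * v) * f y"
    by (simp add: algebra_simps)
  also have "\<dots> = p * f x + q * f y"
    using assms(6) by (simp add: u_def v_def)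
  finally show ?thesis .
qed

lemma concave_on_weighted_two_points:
  fixes f :: "real \<Rightarrow> real"
  assumes "concave_on S f" "x \<in> S" "y \<in> S" "p \<ge> 0" "q \<ge> 0" "p + q > 0"
  shows "p * f x + q * f y \<le> (p + q) * f ((p * x + q * y) / (p + q))"
proof -
  have "convex_on S (\<lambda>x. - f x)"
    using assms(1) by (simp add: concave_on_def)
  from convex_on_weighted_two_points [OF this assms(2-6)] show ?thesis
    by simp
qed

lemma sum_adjacent_regroup:
  fixes p q u :: "nat \<Rightarrow> 'a :: comm_semiring_1"
  shows "(\<Sum>i=0..n. p i * u i + q i * u (Suc i))
       = p 0 * u 0 + (\<Sum>k=1..n. (p k + q (k - 1)) * u k) + q n * u (Suc n)"
proof (induction n)
  case 0
  then show ?case by simp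
next
  case (Suc n)
  then show ?case
    by (simp add: algebra_simps)
qed

lemma right_sum_bounds:
  assumes "a \<le> b" "mono_on {a..b} f" "n \<ge> 1"
  shows "real n * f a \<le> (\<Sum>i=1..n. f (riemann_node a b n i))"
    and "(\<Sum>i=1..n. f (riemann_node a b n i)) \<le> real n * f b"
proof -
  have node: "riemann_node a b n i \<in> {a..b}" if "i \<in> {1..n}" for i
    using that assms(1) by (intro riemann_node_in_interval) auto
  have "(\<Sum>i=1..n. f a) \<le> (\<Sum>i=1..n. f (riemann_node a b n i))"
    using node assms(1) by (intro sum_mono mono_onD [OF assms(2)]) auto
  then show "real n * f a \<le> (\<Sum>i=1..n. f (riemann_node a b n i))"
    by simp
  have "(\<Sum>i=1..n. f (riemann_node a b n i)) \<le> (\<Sum>i=1..n. f b)"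
    using node assms(1) by (intro sum_mono mono_onD [OF assms(2)]) auto
  then show "(\<Sum>i=1..n. f (riemann_node a b n i)) \<le> real n * f b"
    by simp
qed

text \<open>Convex case: bounding each value at a node of mesh \<open>n + 1\<close> by Jensen's
  inequality between the neighbouring nodes of mesh \<open>n\<close>, and summing, every
  interior node of mesh \<open>n\<close> receives total weight \<open>n + 2\<close>, the node \<open>a\<close> weight 1.\<close>

lemma right_sum_refine_convex:
  assumes "a \<le> b" "convex_on {a..b} f" "n \<ge> 1"
  shows "real (n + 1) * (\<Sum>i=1..n+1. f (riemann_node a b (n + 1) i))
       \<le> real (n + 2) * (\<Sum>i=1..n. f (riemann_node a b n i)) + f a"
proof -
  define F where "F i = f (riemann_node a b n i)" for i
  define G where "G i = f (riemann_node a b (n + 1) i)" for i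
  define p :: "nat \<Rightarrow> real" where "p i = real (Suc i)" for i
  define q :: "nat \<Rightarrow> real" where "q i = real n - real i" for i
  have jensen: "real (n + 1) * G (Suc i) \<le> p i * F i + q i * F (Suc i)" if "i \<le> n" for i
  proof (cases "i = n")
    case True \<comment> \<open>both sides equal \<open>(n + 1) f(b)\<close>; Jensen would need the node beyond \<open>b\<close>\<close>
    then show ?thesis
      using assms(3) riemann_node_last [of n a b] riemann_node_last [of "n + 1" a b]
      by (simp add: F_def G_def p_def q_def)
  next
    case False
    then have "Suc i \<le> n"
      using that by simp
    have "p i + q i = real (n + 1)" "p i + q i > 0"
      by (simp_all add: p_def q_def)
    moreover have "riemann_node a b (n + 1) (Suc i)
        = (p i * riemann_node a b n i + q i * riemann_node a b n (Suc i)) / (p i + q i)"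
      using riemann_node_refine [OF assms(3), of a b i] \<open>p i + q i = real (n + 1)\<close>
      by (simp add: p_def q_def field_simps)
    moreover have "p i \<ge> 0" "q i \<ge> 0"
      using that by (simp_all add: p_def q_def)
    ultimately show ?thesis
      using convex_on_weighted_two_points [OF assms(2), of "riemann_node a b n i"
          "riemann_node a b n (Suc i)" "p i" "q i"] riemann_node_in_interval [OF assms(1)]
        \<open>Suc i \<le> n\<close>
      unfolding F_def G_def by simp
  qed
  have "(\<Sum>i=1..n+1. G i) = (\<Sum>i=0..n. G (Suc i))"
    using sum.shift_bounds_cl_Suc_ivl [of G 0 n] by simp
  then have "real (n + 1) * (\<Sum>i=1..n+1. G i) = (\<Sum>i=0..n. real (n + 1) * G (Suc i))"
    by (simp add: sum_distrib_left)
  also have "\<dots> \<le> (\<Sum>i=0..n. p i * F i + q i * F (Suc i))"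
    by (intro sum_mono jensen) simp
  also have "\<dots> = p 0 * F 0 + (\<Sum>k=1..n. (p k + q (k - 1)) * F k) + q n * F (Suc n)"
    by (rule sum_adjacent_regroup)
  also have "(\<Sum>k=1..n. (p k + q (k - 1)) * F k) = (\<Sum>k=1..n. real (n + 2) * F k)"
    by (intro sum.cong) (auto simp: p_def q_def of_nat_diff)
  finally show ?thesis
    by (simp add: F_def G_def p_def q_def sum_distrib_left)
qed

text \<open>Concave case: now each node of mesh \<open>n\<close> is a weighted average of the
  neighbouring nodes of mesh \<open>n + 1\<close>; after summing, every interior node of
  mesh \<open>n + 1\<close> receives weight \<open>n - 1\<close> and the endpoints weight \<open>n\<close>.\<close>

lemma right_sum_refine_concave:
  assumes "a \<le> b" "concave_on {a..b} f" "n \<ge> 1"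
  shows "(real n - 1) * (\<Sum>i=1..n+1. f (riemann_node a b (n + 1) i)) + f b
       \<le> real n * (\<Sum>i=1..n. f (riemann_node a b n i))"
proof -
  define F where "F i = f (riemann_node a b n i)" for i
  define G where "G i = f (riemann_node a b (n + 1) i)" for i
  define p :: "nat \<Rightarrow> real" where "p i = real n - real i" for i
  define q :: "nat \<Rightarrow> real" where "q i = real i" for i
  have jensen: "p i * G i + q i * G (Suc i) \<le> real n * F i" if "i \<le> n" for i
  proof -
    have "p i + q i = real n" "p i + q i > 0"
      using assms(3) by (simp_all add: p_def q_def)
    moreover have "riemann_node a b n i
        = (p i * riemann_node a b (n + 1) i + q i * riemann_node a b (n + 1) (Suc i)) / (p i + q i)"
      using riemann_node_coarsen [OF assms(3), of a b i] \<open>p i + q i = real n\<close> assms(3)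
      by (simp add: p_def q_def field_simps)
    moreover have "p i \<ge> 0" "q i \<ge> 0"
      using that by (simp_all add: p_def q_def)
    ultimately show ?thesis
      using concave_on_weighted_two_points [OF assms(2), of "riemann_node a b (n + 1) i"
          "riemann_node a b (n + 1) (Suc i)" "p i" "q i"] riemann_node_in_interval [OF assms(1)] that
      unfolding F_def G_def by simp
  qed
  have "p 0 * G 0 + (\<Sum>k=1..n. (p k + q (k - 1)) * G k) + q n * G (Suc n)
      = (\<Sum>i=0..n. p i * G i + q i * G (Suc i))"
    by (rule sum_adjacent_regroup [symmetric])
  also have "\<dots> \<le> (\<Sum>i=0..n. real n * F i)"
    by (intro sum_mono jensen) simp
  finally have "real n * f a + (\<Sum>k=1..n. (real n - 1) * G k) + real n * f b
      \<le> real n * f a + real n * (\<Sum>i=1..n. F i)"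
    using riemann_node_last [of "n + 1" a b]
    by (simp add: F_def G_def p_def q_def of_nat_diff sum.atLeast_Suc_atMost sum_distrib_left)
  moreover have "(\<Sum>i=1..n+1. G i) = (\<Sum>i=1..n. G i) + f b"
    using riemann_node_last [of "n + 1" a b] by (simp add: G_def)
  moreover have "(\<Sum>k=1..n. (real n - 1) * G k) = (real n - 1) * (\<Sum>k=1..n. G k)"
    by (simp add: sum_distrib_left)
  ultimately have "(real n - 1) * (\<Sum>i=1..n+1. G i) + f b \<le> real n * (\<Sum>i=1..n. F i)"
    by (simp add: algebra_simps)
  then show ?thesis
    by (simp add: F_def G_def)
qed

lemma riemann_A_step_le:
  assumes "a < b" "n \<ge> 1"
    and "real n * (\<Sum>i=1..n+1. f (riemann_node a b (n + 1) i))
         \<le> real (n + 1) * (\<Sum>i=1..n. f (riemann_node a b n i))"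
  shows "riemann_A f a b (n + 1) \<le> riemann_A f a b n"
proof -
  define S where "S = (\<Sum>i=1..n. f (riemann_node a b n i))"
  define S' where "S' = (\<Sum>i=1..n+1. f (riemann_node a b (n + 1) i))"
  define c where "c = (b - a) / (real n * real (n + 1))"
  have "c \<ge> 0"
    using assms(1) by (simp add: c_def)
  have "riemann_A f a b (n + 1) = c * (real n * S')"
    using assms(2) by (simp add: riemann_A_def S'_def c_def)
  also have "\<dots> \<le> c * (real (n + 1) * S)"
    using assms(3) \<open>c \<ge> 0\<close> by (intro mult_left_mono) (simp_all add: S_def S'_def)
  also have "\<dots> = riemann_A f a b n"
    by (simp add: riemann_A_def S_def c_def)
  finally show ?thesis .
qed

text \<open>In the convex case the
  extra term \<open>f(a)\<close> is absorbed by \<open>n f(a) \<le> S_n\<close>; in the concave case the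
  missing term \<open>f(b)\<close> is supplied by \<open>S_{n+1} \<le> (n + 1) f(b)\<close>.\<close>

lemma riemann_A_antimono:
  assumes "a < b" "mono_on {a..b} f" "convex_on {a..b} f \<or> concave_on {a..b} f" "n \<ge> 1"
  shows "riemann_A f a b (n + 1) \<le> riemann_A f a b n"
proof (rule riemann_A_step_le [OF assms(1,4)])
  define S where "S = (\<Sum>i=1..n. f (riemann_node a b n i))"
  define S' where "S' = (\<Sum>i=1..n+1. f (riemann_node a b (n + 1) i))"
  define N where "N = real n"
  have "N \<ge> 1"
    using assms(4) by (simp add: N_def)
  have "N * S' \<le> (N + 1) * S"
    using assms(3)
  proof
    assume "convex_on {a..b} f"
    then have refine: "(N + 1) * S' \<le> (N + 2) * S + f a"
      using right_sum_refine_convex [of a b f n] assms by (simp add: S_def S'_def N_def add.commute)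
    have lower: "N * f a \<le> S"
      using right_sum_bounds(1) [of a b f n] assms by (simp add: S_def N_def)
    have "(N + 1) * (N * S') = N * ((N + 1) * S')"
      by simp
    also have "\<dots> \<le> N * ((N + 2) * S + f a)"
      using refine \<open>N \<ge> 1\<close> by (intro mult_left_mono) auto
    also have "\<dots> \<le> (N + 1) * ((N + 1) * S)"
      using lower by (simp add: algebra_simps)
    finally show ?thesis
      using \<open>N \<ge> 1\<close> by simp
  next
    assume "concave_on {a..b} f"
    then have refine: "(N - 1) * S' + f b \<le> N * S"
      using right_sum_refine_concave [of a b f n] assms by (simp add: S_def S'_def N_def)
    have upper: "S' \<le> (N + 1) * f b"
      using right_sum_bounds(2) [of a b f "n + 1"] assms by (simp add: S'_def N_def add.commute)
    have "N * (N * S') = (N + 1) * (N - 1) * S' + S'"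
      by (simp add: algebra_simps)
    also have "\<dots> \<le> (N + 1) * ((N - 1) * S' + f b)"
      using upper by (simp add: algebra_simps)
    also have "\<dots> \<le> (N + 1) * (N * S)"
      using refine \<open>N \<ge> 1\<close> by (intro mult_left_mono) auto
    also have "\<dots> = N * ((N + 1) * S)"
      by simp
    finally show ?thesis
      using \<open>N \<ge> 1\<close> by simp
  qed
  then show "real n * S' \<le> real (n + 1) * S"
    by (simp add: N_def add.commute)
qed

lemma convex_on_reflect:
  fixes p :: "'a::real_vector \<Rightarrow> real"
  assumes "convex_on S p" "convex T" "\<And>x. x \<in> T \<Longrightarrow> c - x \<in> S"
  shows "convex_on T (\<lambda>x. p (c - x))"
proof (rule convex_onI [OF _ assms(2)])
  fix t :: real and x y
  assume "t > 0" "t < 1" "x \<in> T" "y \<in> T"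
  have "c - ((1 - t) *\<^sub>R x + t *\<^sub>R y) = (1 - t) *\<^sub>R (c - x) + t *\<^sub>R (c - y)"
    by (simp add: algebra_simps)
  moreover have "p ((1 - t) *\<^sub>R (c - x) + t *\<^sub>R (c - y)) \<le> (1 - t) * p (c - x) + t * p (c - y)"
    using \<open>t > 0\<close> \<open>t < 1\<close> \<open>x \<in> T\<close> \<open>y \<in> T\<close> by (intro convex_onD [OF assms(1)]) (auto intro: assms(3))
  ultimately show "p (c - ((1 - t) *\<^sub>R x + t *\<^sub>R y)) \<le> (1 - t) * p (c - x) + t * p (c - y)"
    by simp
qed

lemma reflected_increasing_convex_or_concave:
  fixes f :: "real \<Rightarrow> real"
  assumes "mono_on {a..b} f" "convex_on {a..b} f \<or> concave_on {a..b} f"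
  shows "mono_on {a..b} (\<lambda>x. - f (a + b - x))"
    and "convex_on {a..b} (\<lambda>x. - f (a + b - x)) \<or> concave_on {a..b} (\<lambda>x. - f (a + b - x))"
proof -
  show "mono_on {a..b} (\<lambda>x. - f (a + b - x))"
    by (rule mono_onI) (auto intro: mono_onD [OF assms(1)])
  have reflect: "convex_on {a..b} (\<lambda>x. p (a + b - x))" if "convex_on {a..b} p" for p
    using that by (rule convex_on_reflect) auto
  from assms(2) show "convex_on {a..b} (\<lambda>x. - f (a + b - x)) \<or> concave_on {a..b} (\<lambda>x. - f (a + b - x))"
  proof
    assume "convex_on {a..b} f"
    then show ?thesis
      using reflect [of f] by (simp add: concave_on_def)
  next
    assume "concave_on {a..b} f"
    then show ?thesis
      using reflect [of "\<lambda>x. - f x"] by (simp add: concave_on_def)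
  qed
qed

text \<open>The reflection \<open>x \<mapsto> a + b - x\<close> maps the nodes \<open>x_1, \<dots>, x_n\<close> onto
  \<open>x_{n-1}, \<dots>, x_0\<close>, so the left sum of \<open>f\<close> is minus the right sum of \<open>g\<close>.\<close>

lemma riemann_B_reflect:
  assumes "n \<ge> 1"
  shows "riemann_B f a b n = - riemann_A (\<lambda>x. - f (a + b - x)) a b n"
proof -
  have node: "a + b - riemann_node a b n (Suc k) = riemann_node a b n (n - Suc k)" if "k < n" for k
    using that assms unfolding riemann_node_def by (simp add: of_nat_diff field_simps)
  have "(\<Sum>i=1..n. f (a + b - riemann_node a b n i)) = (\<Sum>k<n. f (a + b - riemann_node a b n (Suc k)))"
    by (simp only: sum.atLeast1_atMost_eq One_nat_def)
  also have "\<dots> = (\<Sum>k<n. f (riemann_node a b n (n - Suc k)))"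
    by (intro sum.cong) (simp_all add: node)
  also have "\<dots> = (\<Sum>k<n. f (riemann_node a b n k))"
    by (rule sum.nat_diff_reindex)
  finally show ?thesis
    unfolding riemann_A_def riemann_B_def by (simp add: atLeast0LessThan sum_negf)
qed

theorem corollary2p2:
  fixes f :: "real \<Rightarrow> real" and a b :: real and n :: nat
  assumes "a < b"
    and "mono_on {a..b} f"
    and "convex_on {a..b} f \<or> concave_on {a..b} f"
    and "n \<ge> 1"
  shows "riemann_A f a b (n + 1) \<le> riemann_A f a b n \<and> riemann_B f a b n \<le> riemann_B f a b (n + 1)"
proof
  show "riemann_A f a b (n + 1) \<le> riemann_A f a b n"
    using riemann_A_antimono assms by blast
next
  let ?g = "\<lambda>x. - f (a + b - x)"
  have "riemann_A ?g a b (n + 1) \<le> riemann_A ?g a b n"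
    using riemann_A_antimono [OF assms(1) reflected_increasing_convex_or_concave [OF assms(2,3)]
        assms(4)] .
  then show "riemann_B f a b n \<le> riemann_B f a b (n + 1)"
    using riemann_B_reflect [of n f a b] riemann_B_reflect [of "n + 1" f a b] assms(4) by simp
qed

end
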